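(* Let $\alpha^\star>0$ and let $\theta:(0,\infty)\to\mathbb{R}$ be a function. For $\Lambda\ge 0$, $m>0$ and $\Delta t>0$ define, for $x>0$, $$A(x)=\cos(\theta(x))-\frac{\Delta t^2(\Lambda/m)}{2}\,\frac{\sin(\theta(x))}{x}.$$ Suppose that $0<\theta(x)<2\arctan(2x/\alpha^\star)$ for all $x>0$. Then for all $\Lambda\ge 0$, $m>0$ and $\Delta t>0$ satisfying $\Delta t^2\Lambda/m<\alpha^\star$, we have $|A(x)|<1$ for all $x>0$.
   Context: $\theta$ is the angle function parametrizing an approximate free ring-polymer update; $\Lambda$ is the curvature of a harmonic external potential $V(q)=(\Lambda/2)q^2$, $m$ a mass and $\Delta t$ a time-step. *)

theory Defs
  imports Complex_Main
begin

end

theory Submission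
  imports Defs
begin

text \<open>With \<open>t = \<theta>/2\<close> the half-angle formulas give
  \<open>cos \<theta> - c sin \<theta> + 1 = 2 cos t (cos t - c sin t)\<close>, which is positive exactly when
  \<open>c tan t < 1\<close>. The hypothesis on \<open>\<theta>\<close> says \<open>tan t < 2x/\<alpha>\<^sup>\<star>\<close>, so for
  \<open>c = \<Delta>t\<^sup>2 (\<Lambda>/m) / (2x)\<close> we get \<open>c tan t < \<Delta>t\<^sup>2 (\<Lambda>/m) / \<alpha>\<^sup>\<star> < 1\<close>.
  The upper bound \<open>cos \<theta> - c sin \<theta> < 1\<close> is immediate from \<open>0 < \<theta> < \<pi>\<close>.\<close>

lemma tan_half_less_if_less_2_arctan:
  fixes \<theta> u :: real
  assumes "0 < \<theta>" "\<theta> < 2 * arctan u"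
  shows "tan (\<theta> / 2) < u"
proof -
  have "tan (\<theta> / 2) < tan (arctan u)"
    using assms arctan_ubound[of u] by (intro tan_monotone) auto
  then show ?thesis by (simp add: tan_arctan)
qed

lemma abs_cos_minus_mult_sin_less_1:
  fixes \<theta> c :: real
  assumes "0 < \<theta>" "\<theta> < pi" "c \<ge> 0" "c * tan (\<theta> / 2) < 1"
  shows "\<bar>cos \<theta> - c * sin \<theta>\<bar> < 1"
proof -
  define t where "t = \<theta> / 2"
  have "0 < t" "t < pi / 2" using assms(1,2) by (auto simp: t_def)
  then have cos_t: "cos t > 0" and sin_t: "sin t > 0"
    by (auto intro: cos_gt_zero sin_gt_zero)
  have \<theta>_eq: "\<theta> = 2 * t" by (simp add: t_def)
  have "c * sin t < cos t"
    using assms(4) cos_t by (simp add: t_def tan_def field_simps)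
  then have "0 < 2 * cos t * (cos t - c * sin t)"
    using cos_t by simp
  also have "\<dots> = cos \<theta> - c * sin \<theta> + 1"
    unfolding \<theta>_eq cos_double_cos sin_double by (simp add: power2_eq_square algebra_simps)
  finally have lower: "-1 < cos \<theta> - c * sin \<theta>" by simp
  have "cos \<theta> < 1"
    using assms(1,2) cos_monotone_0_pi[of 0 \<theta>] by simp
  moreover have "c * sin \<theta> \<ge> 0"
    using assms(1-3) by (simp add: sin_ge_zero)
  ultimately show ?thesis using lower by linarith
qed

theorem theorem2:
  fixes alpha_star :: real and theta :: "real \<Rightarrow> real"
  assumes alpha_pos: "alpha_star > 0"
    and theta_bounds: "\<And>x. x > 0 \<Longrightarrow> 0 < theta x \<and> theta x < 2 * arctan (2 * x / alpha_star)"
  shows "\<forall>\<Lambda> m dt. \<Lambda> \<ge> 0 \<and> m > 0 \<and> dt > 0 \<and> dt^2 * \<Lambda> / m < alpha_star \<longrightarrow>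
           (\<forall>x > 0. \<bar>cos (theta x) - (dt^2 * (\<Lambda> / m)) / 2 * (sin (theta x) / x)\<bar> < (1::real))"
proof (intro allI impI)
  fix \<Lambda> m dt x :: real
  assume params: "\<Lambda> \<ge> 0 \<and> m > 0 \<and> dt > 0 \<and> dt^2 * \<Lambda> / m < alpha_star" and "x > 0"
  define a where "a = dt^2 * (\<Lambda> / m)"
  define c where "c = a / (2 * x)"
  have "0 \<le> a" "a < alpha_star" using params by (simp_all add: a_def)
  then have "c \<ge> 0" using \<open>x > 0\<close> by (simp add: c_def)
  have "0 < theta x" and theta_less: "theta x < 2 * arctan (2 * x / alpha_star)"
    using theta_bounds[OF \<open>x > 0\<close>] by auto
  have "theta x < pi" using theta_less arctan_ubound[of "2 * x / alpha_star"] by linarith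
  have "c * tan (theta x / 2) \<le> c * (2 * x / alpha_star)"
    using tan_half_less_if_less_2_arctan[OF \<open>0 < theta x\<close> theta_less] \<open>c \<ge> 0\<close>
    by (intro mult_left_mono) auto
  also have "\<dots> = a / alpha_star" using \<open>x > 0\<close> by (simp add: c_def)
  also have "\<dots> < 1" using \<open>a < alpha_star\<close> alpha_pos by simp
  finally have "\<bar>cos (theta x) - c * sin (theta x)\<bar> < 1"
    using abs_cos_minus_mult_sin_less_1 \<open>0 < theta x\<close> \<open>theta x < pi\<close> \<open>c \<ge> 0\<close> by blast
  then show "\<bar>cos (theta x) - (dt^2 * (\<Lambda> / m)) / 2 * (sin (theta x) / x)\<bar> < 1"
    by (simp add: c_def a_def)
qed

end
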